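(* Let $y>0$ and $\mu_0\in(-1,0)$. If $x>0$ and $$x\ge L_{\mu_0}(y)=\frac{\sqrt{(y-\mu_0-2)^2+4y}-y-\mu_0}{2y},$$ then $Q_\mu(x,y)>0$ for all $\mu\ge\mu_0$.
   Context: For real $\mu$, $x>0$, $y\ge 0$: $Q_{\mu}(x,y)=x^{\frac12(1-\mu)}\int_y^{\infty} t^{\frac12(\mu-1)}e^{-t-x}I_{\mu-1}(2\sqrt{xt})\,dt$, where $I_\nu$ is the modified Bessel function of the first kind. *)

theory Defs
  imports "HOL-Analysis.Analysis"
begin

text \<open>The reciprocal Gamma function rGamma is used so that terms with k+nu+1 a non-positive
  integer vanish (the standard convention, needed e.g. for integer negative order).\<close>
definition besselI :: "real \<Rightarrow> real \<Rightarrow> real" where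
  "besselI nu z = (\<Sum>k. (z / 2) powr (2 * real k + nu) * rGamma (real k + nu + 1) / fact k)"

definition marcumQ :: "real \<Rightarrow> real \<Rightarrow> real \<Rightarrow> real" where
  "marcumQ mu x y = x powr ((1 - mu) / 2) *
     (LINT t:{y..}|lborel. t powr ((mu - 1) / 2) * exp (- t - x) * besselI (mu - 1) (2 * sqrt (x * t)))"

definition L_bound :: "real \<Rightarrow> real \<Rightarrow> real" where
  "L_bound mu0 y = (sqrt ((y - mu0 - 2)^2 + 4 * y) - y - mu0) / (2 * y)"

end

theory Submission
  imports Defs
begin

text \<open>Writing w = x t, the Bessel factor of the integrand is
  I_(mu-1)(2 sqrt w) = w^((mu-1)/2) * sum_k w^k / (k! Gamma(k + mu)).
  For mu > -1 the terms with k >= 2 are nonnegative, and by Gamma(mu + 1) = mu Gamma(mu) the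
  first two add up to (w + mu) / Gamma(mu + 1); so the integrand is positive wherever x t + mu > 0.
  The bound x >= L_mu0(y) gives x y > -mu0 >= -mu, so this holds on the whole range t >= y.
  Since 1/Gamma(k + mu) <= 1/(k-2)!, the series grows at most like exp(2 sqrt w), and
  2 sqrt(x t) <= 2 x + t/2 shows that exp(-t) still wins: the integrand is integrable and
  Q_mu(x, y) > 0.\<close>

lemma power_div_fact_le_exp:
  fixes x :: real
  assumes "0 \<le> x"
  shows "x ^ n / fact n \<le> exp x"
proof -
  have sums: "(\<lambda>k. x ^ k / fact k) sums exp x"
    using exp_converges[of x] by (simp add: divide_inverse mult.commute)
  have "(\<Sum>k\<in>{n}. x ^ k / fact k) \<le> (\<Sum>k. x ^ k / fact k)"
    by (rule sum_le_suminf) (use sums assms in \<open>auto simp: sums_iff\<close>)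
  with sums show ?thesis by (simp add: sums_iff)
qed

lemma summable_power_div_fact: "summable (\<lambda>k. (x::real) ^ k / fact k)"
  using summable_exp[of x] by (simp add: divide_inverse mult.commute)

definition besselI_reduced_term :: "real \<Rightarrow> real \<Rightarrow> nat \<Rightarrow> real" where
  "besselI_reduced_term mu w k = w ^ k * rGamma (real k + mu) / fact k"

definition besselI_reduced :: "real \<Rightarrow> real \<Rightarrow> real" where
  "besselI_reduced mu w = (\<Sum>k. besselI_reduced_term mu w k)"

definition rGamma_head_bound :: "real \<Rightarrow> real" where
  "rGamma_head_bound mu = 1 + \<bar>rGamma mu\<bar> + \<bar>rGamma (mu + 1)\<bar> + \<bar>rGamma (mu + 2)\<bar>"

text \<open>For \<open>k < 3\<close> the truncated subtraction makes \<open>fact (k - 2) = 1\<close>.\<close>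
lemma abs_rGamma_le_fact:
  assumes "mu > -1"
  shows "\<bar>rGamma (real k + mu)\<bar> \<le> rGamma_head_bound mu / fact (k - 2)"
proof (cases "k < 3")
  case True
  then show ?thesis
    by (auto simp: rGamma_head_bound_def less_Suc_eq numeral_3_eq_3 add.commute)
next
  case False
  have "fact (k - 2) = Gamma (real (k - 2) + 1)"
    using Gamma_fact[of "k - 2", where 'a=real] by (simp add: add.commute)
  also have "\<dots> < Gamma (real k + mu)"
    using False assms by (intro Gamma_real_strict_mono) auto
  finally have "rGamma (real k + mu) \<le> 1 / fact (k - 2)"
    by (simp add: rGamma_inverse_Gamma inverse_eq_divide frac_le)
  moreover have "1 / fact (k - 2) \<le> rGamma_head_bound mu / fact (k - 2)"
    by (intro divide_right_mono) (auto simp: rGamma_head_bound_def)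
  moreover have "rGamma (real k + mu) > 0"
    using False assms by (simp add: rGamma_inverse_Gamma)
  ultimately show ?thesis by simp
qed

lemma power_div_fact_diff_le:
  fixes w :: real
  assumes "0 \<le> w"
  shows "w ^ k / fact (k - 2) \<le> (1 + w)\<^sup>2 * exp (sqrt w) * (1 + sqrt w) ^ k"
proof (cases "k < 2")
  case True
  have "w ^ k \<le> (1 + w) ^ k" using assms by (intro power_mono) auto
  also have "\<dots> \<le> (1 + w)\<^sup>2" using True assms by (intro power_increasing) auto
  also have "\<dots> \<le> (1 + w)\<^sup>2 * (exp (sqrt w) * (1 + sqrt w) ^ k)"
  proof -
    have "1 \<le> exp (sqrt w) * (1 + sqrt w) ^ k"
      using assms mult_mono[of 1 "exp (sqrt w)" 1 "(1 + sqrt w) ^ k"] by (simp add: one_le_power)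
    then show ?thesis by (simp add: mult_le_cancel_left1)
  qed
  moreover have "fact (k - 2) = (1::real)" using True by simp
  ultimately show ?thesis by (simp add: mult.assoc)
next
  case False
  define s where "s = sqrt w"
  have s: "0 \<le> s" "w = s\<^sup>2" using assms by (auto simp: s_def)
  have "2 * k = 2 + (k - 2) + k" using False by simp
  then have "w ^ k = s\<^sup>2 * s ^ (k - 2) * s ^ k"
    unfolding s(2) power_mult[symmetric] by (simp only: power_add)
  then have "w ^ k / fact (k - 2) = s\<^sup>2 * (s ^ (k - 2) / fact (k - 2)) * s ^ k"
    by simp
  also have "\<dots> \<le> (1 + w)\<^sup>2 * exp s * (1 + s) ^ k"
  proof -
    have "s \<le> 1 + s\<^sup>2"
      using zero_le_power2[of "s - 1"] s(1) by (simp add: power2_eq_square algebra_simps)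
    then have "s\<^sup>2 \<le> (1 + w)\<^sup>2"
      using s by (intro power_mono) auto
    moreover have "s ^ (k - 2) / fact (k - 2) \<le> exp s"
      using s(1) by (rule power_div_fact_le_exp)
    moreover have "s ^ k \<le> (1 + s) ^ k"
      using s(1) by (intro power_mono) auto
    ultimately show ?thesis
      using s(1) by (intro mult_mono) auto
  qed
  finally show ?thesis by (simp add: s_def)
qed

lemma abs_besselI_reduced_term_le:
  assumes "mu > -1" "0 \<le> w"
  shows "\<bar>besselI_reduced_term mu w k\<bar>
    \<le> rGamma_head_bound mu * (1 + w)\<^sup>2 * exp (sqrt w) * ((1 + sqrt w) ^ k / fact k)"
proof -
  have C: "0 \<le> rGamma_head_bound mu" by (simp add: rGamma_head_bound_def)
  have "\<bar>besselI_reduced_term mu w k\<bar> = w ^ k * \<bar>rGamma (real k + mu)\<bar> / fact k"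
    using assms by (simp add: besselI_reduced_term_def abs_mult)
  also have "\<dots> \<le> w ^ k * (rGamma_head_bound mu / fact (k - 2)) / fact k"
    using assms abs_rGamma_le_fact by (intro divide_right_mono mult_left_mono) auto
  also have "\<dots> = rGamma_head_bound mu * (w ^ k / fact (k - 2)) / fact k"
    by simp
  also have "\<dots> \<le> rGamma_head_bound mu * ((1 + w)\<^sup>2 * exp (sqrt w) * (1 + sqrt w) ^ k) / fact k"
    using C assms(2) power_div_fact_diff_le by (intro divide_right_mono mult_left_mono) auto
  finally show ?thesis by simp
qed

lemma summable_besselI_reduced_term:
  assumes "mu > -1" "0 \<le> w"
  shows "summable (\<lambda>k. \<bar>besselI_reduced_term mu w k\<bar>)"
  by (rule summable_comparison_test[OF _ summable_mult[OF summable_power_div_fact]])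
    (use abs_besselI_reduced_term_le[OF assms] in auto)

lemma abs_besselI_reduced_le:
  assumes "mu > -1" "0 \<le> w"
  shows "\<bar>besselI_reduced mu w\<bar> \<le> rGamma_head_bound mu * (1 + w)\<^sup>2 * exp (1 + 2 * sqrt w)"
proof -
  let ?E = "rGamma_head_bound mu * (1 + w)\<^sup>2 * exp (sqrt w)"
  have "\<bar>besselI_reduced mu w\<bar> \<le> (\<Sum>k. \<bar>besselI_reduced_term mu w k\<bar>)"
    unfolding besselI_reduced_def
    using summable_rabs[OF summable_besselI_reduced_term[OF assms]] .
  also have "\<dots> \<le> (\<Sum>k. ?E * ((1 + sqrt w) ^ k / fact k))"
    by (intro suminf_le summable_besselI_reduced_term[OF assms] abs_besselI_reduced_term_le[OF assms]
        summable_mult summable_power_div_fact)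
  also have "\<dots> = ?E * exp (1 + sqrt w)"
    using exp_converges[of "1 + sqrt w"]
    by (subst suminf_mult[OF summable_power_div_fact]) (simp add: sums_iff divide_inverse mult.commute)
  finally show ?thesis by (simp add: mult.assoc add.commute flip: exp_add)
qed

lemma besselI_reduced_pos:
  assumes "mu > -1" "0 \<le> w" "w + mu > 0"
  shows "besselI_reduced mu w > 0"
proof -
  let ?a = "besselI_reduced_term mu w"
  have sum: "summable ?a"
    using summable_besselI_reduced_term[OF assms(1,2)] by (rule summable_rabs_cancel)
  have head: "?a 0 + ?a 1 = (w + mu) * rGamma (mu + 1)"
    using rGamma_plus1[of mu] by (simp add: besselI_reduced_term_def algebra_simps)
  have "0 < rGamma (mu + 1)"
    using assms(1) by (simp add: rGamma_inverse_Gamma)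
  with head assms(3) have "0 < ?a 0 + ?a 1" by simp
  moreover have "0 \<le> (\<Sum>k. ?a (k + 2))"
  proof (rule suminf_nonneg)
    show "summable (\<lambda>k. ?a (k + 2))" using sum by (rule summable_ignore_initial_segment)
    show "0 \<le> ?a (k + 2)" for k
      using assms(1,2) by (simp add: besselI_reduced_term_def rGamma_inverse_Gamma)
  qed
  moreover have "besselI_reduced mu w = (\<Sum>k. ?a (k + 2)) + (\<Sum>k<2. ?a k)"
    unfolding besselI_reduced_def by (rule suminf_split_initial_segment[OF sum])
  ultimately show ?thesis by (simp add: numeral_2_eq_2)
qed

lemma besselI_eq_besselI_reduced:
  assumes "w > 0" "mu > -1"
  shows "besselI (mu - 1) (2 * sqrt w) = w powr ((mu - 1) / 2) * besselI_reduced mu w"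
proof -
  have series_term: "(2 * sqrt w / 2) powr (2 * real k + (mu - 1)) * rGamma (real k + (mu - 1) + 1) / fact k
      = w powr ((mu - 1) / 2) * besselI_reduced_term mu w k" for k
  proof -
    have "sqrt w powr (2 * real k + (mu - 1)) = w powr (1 / 2 * (2 * real k + (mu - 1)))"
      using assms(1) by (simp only: powr_half_sqrt[symmetric] powr_powr less_imp_le)
    also have "1 / 2 * (2 * real k + (mu - 1)) = real k + (mu - 1) / 2"
      by (simp add: field_simps)
    also have "w powr (real k + (mu - 1) / 2) = w ^ k * w powr ((mu - 1) / 2)"
      using assms(1) by (simp add: powr_add powr_realpow)
    finally have "sqrt w powr (2 * real k + (mu - 1)) = w ^ k * w powr ((mu - 1) / 2)" .
    moreover have "2 * sqrt w / 2 = sqrt w" "real k + (mu - 1) + 1 = real k + mu"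
      by simp_all
    ultimately show ?thesis
      unfolding besselI_reduced_term_def by (simp only:) (simp add: mult_ac)
  qed
  have "summable (besselI_reduced_term mu w)"
    using assms by (intro summable_rabs_cancel[OF summable_besselI_reduced_term]) auto
  then show ?thesis
    unfolding besselI_def besselI_reduced_def series_term by (rule suminf_mult)
qed

lemma powr_le_const_mult_exp:
  fixes p a y :: real
  assumes "a > 0" "y > 0"
  shows "\<exists>C. \<forall>t\<ge>y. t powr p \<le> C * exp (a * t)"
proof (cases "p \<le> 0")
  case True
  have "t powr p \<le> y powr p * exp (a * t)" if "y \<le> t" for t
  proof -
    have "t powr p \<le> y powr p" using that assms True by (intro powr_mono2') auto
    also have "\<dots> \<le> y powr p * exp (a * t)" using that assms by simp
    finally show ?thesis .
  qed
  then show ?thesis by blast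
next
  case False
  have "t powr p \<le> exp (p * (ln (p / a) - 1)) * exp (a * t)" if "y \<le> t" for t
  proof -
    have t: "t > 0" using that assms by simp
    have "ln (a * t / p) \<le> a * t / p - 1"
      using t False assms by (intro ln_le_minus_one) auto
    then have "ln t \<le> a * t / p - 1 + ln (p / a)"
      using t False assms by (simp add: ln_div ln_mult)
    then have "p * ln t \<le> p * (ln (p / a) - 1) + a * t"
      using False by (simp add: field_simps mult_left_mono)
    then show ?thesis
      using t by (simp add: powr_def flip: exp_add)
  qed
  then show ?thesis by blast
qed

definition marcumQ_integrand :: "real \<Rightarrow> real \<Rightarrow> real \<Rightarrow> real" where
  "marcumQ_integrand mu x t = t powr ((mu - 1) / 2) * exp (- t - x) * besselI (mu - 1) (2 * sqrt (x * t))"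

lemma marcumQ_eq_set_integral:
  "marcumQ mu x y = x powr ((1 - mu) / 2) * (LINT t:{y..}|lborel. marcumQ_integrand mu x t)"
  by (simp add: marcumQ_def marcumQ_integrand_def)

lemma marcumQ_integrand_eq:
  assumes "x > 0" "t > 0" "mu > -1"
  shows "marcumQ_integrand mu x t
    = x powr ((mu - 1) / 2) * t powr (mu - 1) * exp (- t - x) * besselI_reduced mu (x * t)"
proof -
  have "t powr ((mu - 1) / 2) * (x * t) powr ((mu - 1) / 2) = x powr ((mu - 1) / 2) * t powr (mu - 1)"
    using assms by (simp add: powr_mult powr_add[symmetric])
  then show ?thesis
    using assms unfolding marcumQ_integrand_def
    by (simp add: real_sqrt_mult[symmetric] besselI_eq_besselI_reduced mult_ac)
qed

lemma marcumQ_integrand_pos: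
  assumes "x > 0" "t > 0" "mu > -1" "x * t + mu > 0"
  shows "marcumQ_integrand mu x t > 0"
  using assms besselI_reduced_pos[of mu "x * t"] by (simp add: marcumQ_integrand_eq)

lemma exp_two_sqrt_mult_le:
  fixes x t :: real
  assumes "0 \<le> x" "0 \<le> t"
  shows "exp (- t - x) * exp (1 + 2 * sqrt (x * t)) \<le> exp (1 + x) * exp (- t / 2)"
proof -
  have "2 * sqrt (x * t) = sqrt ((4 * x) * t)"
    by (simp add: real_sqrt_mult)
  also have "\<dots> \<le> (4 * x + t) / 2"
    using assms by (intro arith_geo_mean_sqrt) auto
  finally show ?thesis
    by (simp flip: exp_add)
qed

lemma marcumQ_integrand_bound:
  assumes x: "x > 0" and y: "y > 0" and mu: "mu > -1"
  shows "\<exists>K. \<forall>t\<ge>y. \<bar>marcumQ_integrand mu x t\<bar> \<le> K * exp (- t / 4)"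
proof -
  obtain C where C: "\<And>t. t \<ge> y \<Longrightarrow> t powr (mu + 1) \<le> C * exp (1 / 4 * t)"
    using powr_le_const_mult_exp[of "1 / 4" y "mu + 1"] y by auto
  define H where "H = rGamma_head_bound mu"
  have H: "0 \<le> H" by (simp add: H_def rGamma_head_bound_def)
  have "\<bar>marcumQ_integrand mu x t\<bar>
      \<le> (x powr ((mu - 1) / 2) * H * (1 / y + x)\<^sup>2 * C * exp (1 + x)) * exp (- t / 4)"
    if t: "t \<ge> y" for t
  proof -
    have t0: "t > 0" using t y by simp
    have R: "\<bar>besselI_reduced mu (x * t)\<bar> \<le> H * (1 + x * t)\<^sup>2 * exp (1 + 2 * sqrt (x * t))"
      unfolding H_def using x t0 mu by (intro abs_besselI_reduced_le) auto
    have E: "exp (- t - x) * exp (1 + 2 * sqrt (x * t)) \<le> exp (1 + x) * exp (- t / 2)"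
      using x t0 by (intro exp_two_sqrt_mult_le) auto
    have "1 + x * t \<le> (1 / y + x) * t"
      using t y by (simp add: field_simps)
    then have "t powr (mu - 1) * (1 + x * t)\<^sup>2 \<le> t powr (mu - 1) * ((1 / y + x) * t)\<^sup>2"
      using x t0 by (intro mult_left_mono power_mono) auto
    also have "\<dots> = (1 / y + x)\<^sup>2 * (t powr (mu - 1) * t powr 2)"
      using t0 by (simp add: power_mult_distrib)
    also have "\<dots> = (1 / y + x)\<^sup>2 * t powr (mu + 1)"
      by (simp add: powr_add[symmetric] add.commute)
    also have "\<dots> \<le> (1 / y + x)\<^sup>2 * (C * exp (t / 4))"
      using C[OF t] by (intro mult_left_mono) auto
    finally have P: "t powr (mu - 1) * (1 + x * t)\<^sup>2 \<le> (1 / y + x)\<^sup>2 * C * exp (t / 4)"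
      by simp
    have "\<bar>marcumQ_integrand mu x t\<bar>
        = x powr ((mu - 1) / 2) * t powr (mu - 1) * exp (- t - x) * \<bar>besselI_reduced mu (x * t)\<bar>"
      using x t0 mu by (simp add: marcumQ_integrand_eq abs_mult)
    also have "\<dots> \<le> x powr ((mu - 1) / 2) * t powr (mu - 1) * exp (- t - x)
        * (H * (1 + x * t)\<^sup>2 * exp (1 + 2 * sqrt (x * t)))"
      using R by (intro mult_left_mono) auto
    also have "\<dots> = x powr ((mu - 1) / 2) * H * (t powr (mu - 1) * (1 + x * t)\<^sup>2)
        * (exp (- t - x) * exp (1 + 2 * sqrt (x * t)))"
      by (simp only: mult_ac)
    also have "\<dots> \<le> x powr ((mu - 1) / 2) * H * ((1 / y + x)\<^sup>2 * C * exp (t / 4))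
        * (exp (1 + x) * exp (- t / 2))"
    proof -
      have "0 \<le> x powr ((mu - 1) / 2) * H" using H by simp
      moreover have "0 \<le> C"
        using C[OF t] t0 by (smt (verit) exp_gt_zero mult_nonpos_nonneg powr_gt_zero)
      ultimately show ?thesis
        by (intro mult_mono[OF mult_left_mono[OF P] E]) simp_all
    qed
    also have "\<dots> = (x powr ((mu - 1) / 2) * H * (1 / y + x)\<^sup>2 * C * exp (1 + x))
        * (exp (t / 4) * exp (- t / 2))"
      by (simp only: mult_ac)
    also have "exp (t / 4) * exp (- t / 2) = exp (- t / 4)"
      by (simp flip: exp_add)
    finally show ?thesis .
  qed
  then show ?thesis by blast
qed

lemma set_integrable_exp_neg:
  fixes a :: real
  assumes "a > 0"
  shows "set_integrable lborel {y..} (\<lambda>t. exp (- a * t))"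
proof -
  have "(\<lambda>t. exp (- a * t)) integrable_on {y..}"
    using assms by (rule integrable_on_exp_minus_to_infinity)
  then have "(\<lambda>t. exp (- a * t)) absolutely_integrable_on {y..}"
    by (rule nonnegative_absolutely_integrable_1) simp
  moreover have "(\<lambda>t. indicator {y..} t *\<^sub>R exp (- a * t)) \<in> borel_measurable lborel"
    by measurable
  ultimately show ?thesis
    unfolding set_integrable_def by (simp add: integrable_completion)
qed

lemma set_integrable_marcumQ_integrand:
  assumes "x > 0" "y > 0" "mu > -1"
  shows "set_integrable lborel {y..} (marcumQ_integrand mu x)"
proof -
  obtain K where K: "\<And>t. t \<ge> y \<Longrightarrow> \<bar>marcumQ_integrand mu x t\<bar> \<le> K * exp (- t / 4)"
    using marcumQ_integrand_bound[OF assms] by blast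
  show ?thesis
  proof (rule set_integrable_bound[OF set_integrable_mult_right[OF set_integrable_exp_neg]])
    show "set_borel_measurable lborel {y..} (marcumQ_integrand mu x)"
      unfolding set_borel_measurable_def marcumQ_integrand_def besselI_def by measurable
    show "AE t in lborel. t \<in> {y..} \<longrightarrow> norm (marcumQ_integrand mu x t) \<le> norm (K * exp (- (1 / 4) * t))"
    proof (intro AE_I2 impI)
      fix t :: real assume "t \<in> {y..}"
      then have "\<bar>marcumQ_integrand mu x t\<bar> \<le> K * exp (- (1 / 4) * t)" using K by simp
      then show "norm (marcumQ_integrand mu x t) \<le> norm (K * exp (- (1 / 4) * t))" by simp
    qed
  qed simp
qed

lemma set_integral_pos:
  fixes f :: "'a \<Rightarrow> real"
  assumes "set_integrable M A f" "A \<in> sets M" "A \<notin> null_sets M" "\<And>x. x \<in> A \<Longrightarrow> 0 < f x"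
  shows "0 < (LINT x:A|M. f x)"
proof -
  have "0 \<le> (LINT x:A|M. f x)"
    unfolding set_lebesgue_integral_def
    by (intro integral_nonneg_AE AE_I2) (simp add: indicator_def assms(4) less_imp_le)
  moreover have "(LINT x:A|M. f x) \<noteq> 0"
  proof
    let ?g = "\<lambda>x. indicator A x * f x"
    assume "(LINT x:A|M. f x) = 0"
    moreover have "(LINT x:A|M. ?g x) = (LINT x:A|M. f x)"
      by (intro set_lebesgue_integral_cong) (auto simp: assms(2))
    ultimately have "A \<in> null_sets M"
      using assms by (intro null_if_pos_func_has_zero_int[of M ?g]) (auto simp: set_integrable_def)
    with assms(3) show False ..
  qed
  ultimately show ?thesis by simp
qed

lemma marcumQ_pos:
  assumes "x > 0" "y > 0" "mu > -1" "x * y + mu > 0"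
  shows "marcumQ mu x y > 0"
proof -
  have "0 < marcumQ_integrand mu x t" if "t \<in> {y..}" for t
  proof (rule marcumQ_integrand_pos)
    have "x * y \<le> x * t"
      using that assms(1) by (intro mult_left_mono) auto
    then show "x * t + mu > 0"
      using assms(4) by linarith
  qed (use that assms in auto)
  moreover have "{y..} \<notin> null_sets lborel"
    using emeasure_mono[of "{y..y + 1}" "{y..}" lborel] by (auto simp: null_sets_def)
  ultimately have "0 < (LINT t:{y..}|lborel. marcumQ_integrand mu x t)"
    using assms by (intro set_integral_pos set_integrable_marcumQ_integrand) auto
  then show ?thesis
    using assms(1) by (simp add: marcumQ_eq_set_integral)
qed

lemma L_bound_mult_gt:
  assumes "y > 0" "mu0 > -1"
  shows "L_bound mu0 y * y > - mu0"
proof -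
  have "(y - mu0 - 2)\<^sup>2 + 4 * y = (y - mu0)\<^sup>2 + 4 * (mu0 + 1)"
    by (simp add: power2_eq_square algebra_simps)
  then have "(y - mu0)\<^sup>2 < (y - mu0 - 2)\<^sup>2 + 4 * y"
    using assms(2) by simp
  then have "sqrt ((y - mu0)\<^sup>2) < sqrt ((y - mu0 - 2)\<^sup>2 + 4 * y)"
    by (rule real_sqrt_less_mono)
  then have "y - mu0 < sqrt ((y - mu0 - 2)\<^sup>2 + 4 * y)"
    by simp
  with assms(1) show ?thesis
    by (simp add: L_bound_def)
qed

theorem corollary1:
  fixes x y mu0 :: real
  assumes "y > 0" and "-1 < mu0" and "mu0 < 0"
    and "x > 0" and "x \<ge> L_bound mu0 y"
  shows "\<forall>mu::real. mu \<ge> mu0 \<longrightarrow> marcumQ mu x y > 0"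
proof (intro allI impI)
  fix mu :: real
  assume "mu \<ge> mu0"
  have "x * y \<ge> L_bound mu0 y * y"
    using assms by (intro mult_right_mono) auto
  then have "x * y + mu > 0"
    using L_bound_mult_gt[of y mu0] assms(1,2) \<open>mu \<ge> mu0\<close> by linarith
  then show "marcumQ mu x y > 0"
    using marcumQ_pos assms \<open>mu \<ge> mu0\<close> by simp
qed

end
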